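(* Let $T$ be a $k$-IET on $I=[\ell,r)$ over the ordered alphabet $\mathcal{A}=\{a_1<\dots<a_k\}$ with partition $(I_a)_{a\in\mathcal{A}}$ and permutation $\pi\in S_{\mathcal{A}}$. Suppose $|I_{a_1}|=|I_{\pi(a_1)}|$ and $a_1\neq\pi(a_1)$. Let $I'=[\ell+|I_{a_1}|,r)$, $\mathcal{A}'=\mathcal{A}\setminus\{a_1\}$ (with the induced order) and define $\pi'\in S_{\mathcal{A}'}$ by $\pi'(a)=\pi(a_1)$ if $a=\pi^{-1}(a_1)$ and $\pi'(a)=\pi(a)$ otherwise. Then the map induced by $T$ on $I'$ (the first-return map $x\mapsto T^{\nu(x)}(x)$, $\nu(x)=\min\{n>0:T^n(x)\in I'\}$), denoted $\lambda(T)$, is the $(k-1)$-IET on $I'$ over $\mathcal{A}'$ with partition $(I_a)_{a\in\mathcal{A}'}$ and permutation $\pi'$. Moreover, for every $x\in I'$, $\Omega_T(x)=\varphi(\Omega_{\lambda(T)}(x))$, where $\varphi:\mathcal{A}'^*\to\mathcal{A}^*$ (extended to infinite words) is the morphism with $\varphi(\pi(a_1))=\pi(a_1)a_1$ and $\varphi(c)=c$ for every letter $c\neq\pi(a_1)$.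
   Context: A $k$-IET $T$ on $I=[\ell,r)$ over $\mathcal{A}$ is given by a partition of $I$ into left-closed right-open intervals $(I_a)_{a\in\mathcal{A}}$ of positive length, with $I_a$ to the left of $I_b$ whenever $a<b$, and a permutation $\pi$ of $\mathcal{A}$; $T(x)=x+\tau_a$ for $x\in I_a$ where $\tau_a=\sum_{b:\,\pi^{-1}(b)<\pi^{-1}(a)}|I_b|-\sum_{b<a}|I_b|$ (so the image intervals $T(I_{\pi(a_1)}),\dots,T(I_{\pi(a_k)})$ appear from left to right). The trajectory of $x$ under an IET $S$ over an alphabet $\mathcal{C}$ with partition $(J_c)$ is $\Omega_S(x)=w_0w_1\cdots$ with $w_i=c$ iff $S^i(x)\in J_c$. *)

theory Defs
  imports Complex_Main
begin

text \<open>An IET is given by data (A, len, p, l): a finite nonempty linearly ordered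
alphabet A, positive lengths len a of the subintervals I_a, a permutation p of A,
and the left endpoint l.\<close>

definition iet_data :: "'a::linorder set \<Rightarrow> ('a \<Rightarrow> real) \<Rightarrow> ('a \<Rightarrow> 'a) \<Rightarrow> bool" where
  "iet_data A len p \<longleftrightarrow> finite A \<and> A \<noteq> {} \<and> (\<forall>a\<in>A. len a > 0) \<and> bij_betw p A A"

definition iet_right :: "'a::linorder set \<Rightarrow> ('a \<Rightarrow> real) \<Rightarrow> real \<Rightarrow> real" where
  "iet_right A len l = l + sum len A"

definition subint :: "'a::linorder set \<Rightarrow> ('a \<Rightarrow> real) \<Rightarrow> real \<Rightarrow> 'a \<Rightarrow> real set" where
  "subint A len l a = {l + sum len {b\<in>A. b < a} ..< l + sum len {b\<in>A. b < a} + len a}"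

definition tau :: "'a::linorder set \<Rightarrow> ('a \<Rightarrow> real) \<Rightarrow> ('a \<Rightarrow> 'a) \<Rightarrow> 'a \<Rightarrow> real" where
  "tau A len p a = sum len {b\<in>A. inv_into A p b < inv_into A p a} - sum len {b\<in>A. b < a}"

text \<open>The IET map T (identity outside the interval, irrelevant there).\<close>
definition iet :: "'a::linorder set \<Rightarrow> ('a \<Rightarrow> real) \<Rightarrow> ('a \<Rightarrow> 'a) \<Rightarrow> real \<Rightarrow> real \<Rightarrow> real" where
  "iet A len p l x =
     (if \<exists>a\<in>A. x \<in> subint A len l a
      then x + tau A len p (THE a. a \<in> A \<and> x \<in> subint A len l a)
      else x)"

definition traj :: "'a::linorder set \<Rightarrow> ('a \<Rightarrow> real) \<Rightarrow> ('a \<Rightarrow> 'a) \<Rightarrow> real \<Rightarrow> real \<Rightarrow> nat \<Rightarrow> 'a" where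
  "traj A len p l x i = (THE c. c \<in> A \<and> (iet A len p l ^^ i) x \<in> subint A len l c)"

definition return_time :: "(real \<Rightarrow> real) \<Rightarrow> real set \<Rightarrow> real \<Rightarrow> nat" where
  "return_time T J x = (LEAST n. n > 0 \<and> (T ^^ n) x \<in> J)"

definition induced_map :: "(real \<Rightarrow> real) \<Rightarrow> real set \<Rightarrow> real \<Rightarrow> real" where
  "induced_map T J x = (T ^^ return_time T J x) x"

text \<open>Extension of a non-erasing morphism f to infinite words: the n-th letter of
f(w) is the n-th letter of f(w_0) ... f(w_n) (which has length > n).\<close>
definition morph_inf :: "('a \<Rightarrow> 'b list) \<Rightarrow> (nat \<Rightarrow> 'a) \<Rightarrow> nat \<Rightarrow> 'b" where
  "morph_inf f w n = concat (map (f \<circ> w) [0..<Suc n]) ! n"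

end

theory Submission
  imports Defs
begin

text \<open>Under \<open>T\<close> the interval of \<open>\<pi>(a1)\<close> is placed first, and as it has the length of \<open>I_a1\<close>
it lands exactly on \<open>I_a1 = [l, l')\<close>; every other interval lands inside \<open>I' = [l', r)\<close>. So a
point of \<open>I'\<close> returns to \<open>I'\<close> after one step, unless it lies in the interval of \<open>\<pi>(a1)\<close>, in
which case it returns after two steps, passing through \<open>I_a1\<close>. Deleting \<open>a1\<close> and giving
\<open>\<pi>(a1)\<close> the image slot of the preimage of \<open>a1\<close> leaves every remaining interval, and every
image interval other than that of \<open>\<pi>(a1)\<close>, in place. Hence all translations
are unchanged except that of \<open>\<pi>(a1)\<close>, which becomes the sum of the two translations it
undergoes under \<open>T\<close>, and reading off the letters visited in these one- and two-step return
blocks gives \<open>\<Omega>\<^sub>T = \<phi>(\<Omega>\<^sub>\<lambda>\<^sub>(\<^sub>T\<^sub>))\<close>.\<close>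

lemma sum_less_add_le_sum_less:
  fixes len :: "'a::linorder \<Rightarrow> real"
  assumes "finite A" "\<forall>c\<in>A. 0 \<le> len c" "a \<in> A" "a < b"
  shows "sum len {c\<in>A. c < a} + len a \<le> sum len {c\<in>A. c < b}"
proof -
  have "sum len {c\<in>A. c < a} + len a = sum len (insert a {c\<in>A. c < a})"
    using assms(1) by (subst sum.insert) auto
  also have "\<dots> \<le> sum len {c\<in>A. c < b}"
    by (rule sum_mono2) (use assms in auto)
  finally show ?thesis .
qed

lemma obtain_successor:
  fixes a :: "'a::linorder"
  assumes "finite A" "\<exists>b\<in>A. a < b"
  obtains b where "b \<in> A" "a < b" "{c\<in>A. c < b} = {c\<in>A. c \<le> a}"
proof
  let ?b = "Min {c\<in>A. a < c}"
  show "?b \<in> A" "a < ?b"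
    using Min_in[of "{c\<in>A. a < c}"] assms by fastforce+
  have "?b \<le> c" if "c \<in> A" "a < c" for c
    using assms(1) that by (intro Min_le) auto
  then show "{c\<in>A. c < ?b} = {c\<in>A. c \<le> a}"
    using \<open>a < ?b\<close> by (auto intro: le_less_trans simp: not_le[symmetric])
qed

lemma sum_less_split_Min:
  assumes "finite A" "A \<noteq> {}" "Min A < x"
  shows "sum f {i\<in>A. i < x} = f (Min A) + sum f {i\<in>A - {Min A}. i < x}"
proof -
  have "{i\<in>A. i < x} = insert (Min A) {i\<in>A - {Min A}. i < x}"
    using assms Min_in by auto
  then show ?thesis
    using assms(1) by simp
qed

lemma subint_unique:
  assumes "finite A" "\<forall>c\<in>A. 0 \<le> len c" "a \<in> A" "b \<in> A"
    and "x \<in> subint A len l a" "x \<in> subint A len l b"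
  shows "a = b"
proof (rule ccontr)
  assume "a \<noteq> b"
  then consider "a < b" | "b < a"
    by fastforce
  then show False
    by cases (use sum_less_add_le_sum_less[OF assms(1,2)] assms(3-6) in \<open>fastforce simp: subint_def\<close>)+
qed

definition letter_of :: "'a::linorder set \<Rightarrow> ('a \<Rightarrow> real) \<Rightarrow> real \<Rightarrow> real \<Rightarrow> 'a" where
  "letter_of A len l y = (THE a. a \<in> A \<and> y \<in> subint A len l a)"

lemma traj_eq_letter_of_orbit:
  "traj A len p l x = (\<lambda>n. letter_of A len l ((iet A len p l ^^ n) x))"
  by (simp add: traj_def letter_of_def fun_eq_iff)

lemma letter_of_eq:
  assumes "finite A" "\<forall>c\<in>A. 0 \<le> len c" "a \<in> A" "x \<in> subint A len l a"
  shows "letter_of A len l x = a"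
  unfolding letter_of_def by (rule the_equality) (use assms subint_unique[OF assms(1,2)] in auto)

lemma iet_eq_on_subint:
  assumes "finite A" "\<forall>c\<in>A. 0 \<le> len c" "a \<in> A" "x \<in> subint A len l a"
  shows "iet A len p l x = x + tau A len p a"
  using assms letter_of_eq[OF assms] unfolding iet_def letter_of_def by auto

lemma ex_subint:
  fixes len :: "'a::linorder \<Rightarrow> real"
  assumes fin: "finite A" and nonneg: "\<forall>c\<in>A. 0 \<le> len c"
    and x: "l \<le> x" "x < iet_right A len l"
  shows "\<exists>a\<in>A. x \<in> subint A len l a"
proof -
  have "A \<noteq> {}"
    using x by (auto simp: iet_right_def)
  define B where "B = {a\<in>A. l + sum len {c\<in>A. c < a} \<le> x}"
  have "{c\<in>A. c < Min A} = {}"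
    using fin by (auto dest: Min_le[OF fin])
  then have "Min A \<in> B"
    using Min_in[OF fin \<open>A \<noteq> {}\<close>] x unfolding B_def by (simp only: mem_Collect_eq sum.empty) simp
  define a where "a = Max B"
  have "finite B"
    using fin unfolding B_def by simp
  with \<open>Min A \<in> B\<close> have "a \<in> B" and a_max: "\<And>b. b \<in> B \<Longrightarrow> b \<le> a"
    unfolding a_def by (auto intro: Max_in)
  then have "a \<in> A"
    unfolding B_def by simp
  have "x < l + sum len {c\<in>A. c \<le> a}"
  proof (cases "\<exists>b\<in>A. a < b")
    case True
    then obtain b where b: "b \<in> A" "a < b" "{c\<in>A. c < b} = {c\<in>A. c \<le> a}"
      using obtain_successor[OF fin] by blast
    moreover have "b \<notin> B"
      using a_max b(2) by fastforce
    then show ?thesis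
      using b unfolding B_def by auto
  next
    case False
    then have "{c\<in>A. c \<le> a} = A"
      by (auto simp: not_less)
    with x show ?thesis
      by (simp add: iet_right_def)
  qed
  moreover have "{c\<in>A. c \<le> a} = insert a {c\<in>A. c < a}"
    using \<open>a \<in> A\<close> by auto
  then have "sum len {c\<in>A. c \<le> a} = sum len {c\<in>A. c < a} + len a"
    using fin by simp
  ultimately show ?thesis
    using \<open>a \<in> A\<close> \<open>a \<in> B\<close> unfolding subint_def B_def by auto
qed

lemma sum_image_order_reindex:
  assumes "bij_betw p A A" "a \<in> A"
  shows "sum len {b\<in>A. inv_into A p b < inv_into A p a} = sum (len \<circ> p) {i\<in>A. i < inv_into A p a}"
proof -
  have "{b\<in>A. inv_into A p b < inv_into A p a} = p ` {i\<in>A. i < inv_into A p a}"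
    using assms(1) by (force simp: bij_betw_def f_inv_into_f inv_into_into)
  moreover have "inj_on p {i\<in>A. i < inv_into A p a}"
    using assms(1) by (auto simp: bij_betw_def intro: inj_on_subset)
  ultimately show ?thesis
    by (simp add: sum.reindex)
qed

lemma tau_reindex:
  assumes "bij_betw p A A" "a \<in> A"
  shows "tau A len p a = sum (len \<circ> p) {i\<in>A. i < inv_into A p a} - sum len {b\<in>A. b < a}"
  unfolding tau_def sum_image_order_reindex[OF assms] ..

lemma iet_image_subint:
  assumes data: "iet_data A len p" and a: "a \<in> A" and x: "x \<in> subint A len l a"
  defines "s \<equiv> sum (len \<circ> p) {i\<in>A. i < inv_into A p a}"
  shows "iet A len p l x \<in> {l + s ..< l + s + len a}" and "s + len a \<le> sum len A"
proof -
  have fin: "finite A" and nonneg: "\<forall>c\<in>A. 0 \<le> len c" and bij: "bij_betw p A A"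
    using data by (auto simp: iet_data_def less_imp_le)
  show "iet A len p l x \<in> {l + s ..< l + s + len a}"
    using x iet_eq_on_subint[OF fin nonneg a x] tau_reindex[OF bij a]
    unfolding subint_def s_def by auto
  have q: "inv_into A p a \<in> A" "p (inv_into A p a) = a"
    using a bij by (auto simp: bij_betw_def inv_into_into f_inv_into_f)
  have "s + len a = sum (len \<circ> p) (insert (inv_into A p a) {i\<in>A. i < inv_into A p a})"
    using fin q(2) unfolding s_def by (subst sum.insert) auto
  also have "\<dots> \<le> sum (len \<circ> p) A"
    using fin q(1) bij nonneg by (intro sum_mono2) (auto simp: bij_betw_def)
  also have "\<dots> = sum len A"
    using sum.reindex_bij_betw[OF bij] by simp
  finally show "s + len a \<le> sum len A" .
qed

lemma induced_map_eqI:
  assumes "0 < n" "(T ^^ n) x \<in> J" "\<And>k. 0 < k \<Longrightarrow> k < n \<Longrightarrow> (T ^^ k) x \<notin> J"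
  shows "induced_map T J x = (T ^^ n) x"
proof -
  have "return_time T J x = n"
    unfolding return_time_def by (rule Least_equality) (use assms not_less in blast)+
  then show ?thesis
    by (simp add: induced_map_def)
qed

lemma orbit_coding_morph_inf:
  fixes T S :: "'x \<Rightarrow> 'x" and cT :: "'x \<Rightarrow> 'b" and cS :: "'x \<Rightarrow> 'c" and phi :: "'c \<Rightarrow> 'b list"
  assumes S_into: "\<And>y. y \<in> J \<Longrightarrow> S y \<in> J"
    and jump: "\<And>y. y \<in> J \<Longrightarrow> (T ^^ length (phi (cS y))) y = S y"
    and block: "\<And>y i. y \<in> J \<Longrightarrow> i < length (phi (cS y)) \<Longrightarrow> cT ((T ^^ i) y) = phi (cS y) ! i"
    and nonerasing: "\<And>c. phi c \<noteq> []"
    and x: "x \<in> J"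
  shows "(\<lambda>n. cT ((T ^^ n) x)) = morph_inf phi (\<lambda>n. cS ((S ^^ n) x))"
proof
  fix n
  let ?wT = "\<lambda>i. cT ((T ^^ i) x)" and ?wS = "\<lambda>k. cS ((S ^^ k) x)"
  let ?u = "\<lambda>n. concat (map (\<lambda>k. phi (?wS k)) [0..<n])"
  have orbit: "(S ^^ k) x \<in> J" for k
    by (induction k) (simp_all add: x S_into)
  have prefix: "?u n = map ?wT [0..<length (?u n)] \<and> (T ^^ length (?u n)) x = (S ^^ n) x
      \<and> n \<le> length (?u n)" for n
  proof (induction n)
    case 0
    show ?case by simp
  next
    case (Suc n)
    define y where "y = (S ^^ n) x"
    define m where "m = length (?u n)"
    have Tm: "(T ^^ m) x = y"
      using Suc unfolding m_def y_def by simp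
    have u: "?u (Suc n) = ?u n @ phi (cS y)"
      unfolding y_def by simp
    have shift: "(T ^^ (m + i)) x = (T ^^ i) y" for i
      using Tm by (simp add: add.commute[of m] funpow_add)
    let ?k = "length (phi (cS y))"
    have IH: "?u n = map ?wT [0..<m]" "n \<le> m"
      using Suc.IH unfolding m_def by auto
    have "phi (cS y) = map ?wT [m..<m + ?k]"
      by (rule nth_equalityI) (simp_all add: block orbit y_def shift)
    then have "?u (Suc n) = map ?wT [0..<m + ?k]"
      using u IH(1) by (simp add: upt_add_eq_append[of 0 m ?k])
    moreover have "length (?u (Suc n)) = m + ?k"
      using u unfolding m_def by simp
    moreover have "(T ^^ (m + ?k)) x = (S ^^ Suc n) x"
      using shift jump[OF orbit] unfolding y_def by simp
    moreover have "0 < ?k"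
      using nonerasing by blast
    ultimately show ?case
      using IH(2) by (simp del: length_greater_0_conv)
  qed
  have "morph_inf phi ?wS n = ?u (Suc n) ! n"
    by (simp add: morph_inf_def comp_def)
  also have "\<dots> = ?wT n"
  proof -
    obtain L where "?u (Suc n) = map ?wT [0..<L]" "n < L"
      using prefix[of "Suc n"] by (metis Suc_le_eq)
    then show ?thesis
      by simp
  qed
  finally show "?wT n = morph_inf phi ?wS n" ..
qed

locale first_letter_induction =
  fixes A :: "'a::linorder set" and len :: "'a \<Rightarrow> real" and p :: "'a \<Rightarrow> 'a" and l :: real
    and a1 :: 'a and A' :: "'a set" and l' :: real and p' :: "'a \<Rightarrow> 'a" and phi :: "'a \<Rightarrow> 'a list"
  assumes data: "iet_data A len p"
    and a1_def: "a1 = Min A"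
    and eq_len: "len a1 = len (p a1)"
    and neq: "a1 \<noteq> p a1"
    and A'_def: "A' = A - {a1}"
    and l'_def: "l' = l + len a1"
    and p'_def: "p' = (\<lambda>a. if a = inv_into A p a1 then p a1 else p a)"
    and phi_def: "phi = (\<lambda>c. if c = p a1 then [p a1, a1] else [c])"
begin

abbreviation "T \<equiv> iet A len p l"
abbreviation "S \<equiv> iet A' len p' l'"
abbreviation "I' \<equiv> {l'..<iet_right A len l}"

lemma fin: "finite A" and nonempty: "A \<noteq> {}" and pos: "\<forall>a\<in>A. 0 < len a"
    and bij: "bij_betw p A A"
  using data unfolding iet_data_def by auto

lemma nonneg: "\<forall>a\<in>A. 0 \<le> len a"
  using pos by auto

lemma a1_in: "a1 \<in> A"
  using fin nonempty a1_def by simp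

lemma a1_less: "b \<in> A \<Longrightarrow> b \<noteq> a1 \<Longrightarrow> a1 < b"
  using fin a1_def by (simp add: order.not_eq_order_implies_strict)

lemma less_a1_empty: "{b\<in>A. b < a1} = {}"
  using a1_less by force

lemma inv_in: "b \<in> A \<Longrightarrow> inv_into A p b \<in> A"
  using bij by (simp add: bij_betw_def inv_into_into)

lemma p_inv: "b \<in> A \<Longrightarrow> p (inv_into A p b) = b"
  using bij by (simp add: bij_betw_def f_inv_into_f)

lemma inv_p: "b \<in> A \<Longrightarrow> inv_into A p (p b) = b"
  using bij by (simp add: bij_betw_def)

lemma p_a1_in: "p a1 \<in> A"
  using bij a1_in by (rule bij_betw_apply)

lemma p_a1_in': "p a1 \<in> A'"
  using p_a1_in neq unfolding A'_def by simp

lemma inv_a1_in': "inv_into A p a1 \<in> A'"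
  using a1_in inv_in p_inv neq unfolding A'_def by force

lemma bij_p': "bij_betw p' A' A'"
proof -
  let ?j = "inv_into A p a1"
  have "bij_betw p {a1, ?j} {p a1, a1}"
    using a1_in inv_a1_in' p_inv neq unfolding A'_def bij_betw_def by auto
  then have "bij_betw p (A - {a1, ?j}) (A - {p a1, a1})"
    using a1_in inv_in bij_betw_apply[OF bij] by (intro bij_betw_DiffI[OF bij]) auto
  then have "bij_betw p' (A - {a1, ?j}) (A - {p a1, a1})"
    by (rule bij_betw_cong[THEN iffD1, rotated]) (simp add: p'_def)
  moreover have "bij_betw p' {?j} {p a1}"
    by (simp add: p'_def)
  ultimately have "bij_betw p' ((A - {a1, ?j}) \<union> {?j}) ((A - {p a1, a1}) \<union> {p a1})"
    by (rule bij_betw_combine) simp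
  moreover have "(A - {a1, ?j}) \<union> {?j} = A'" "(A - {p a1, a1}) \<union> {p a1} = A'"
    using inv_a1_in' p_a1_in' unfolding A'_def by auto
  ultimately show ?thesis
    by simp
qed

lemma data': "iet_data A' len p'"
  using fin pos bij_p' p_a1_in' unfolding iet_data_def A'_def by auto

lemma inv_p'_p_a1: "inv_into A' p' (p a1) = inv_into A p a1"
  using bij_p' inv_a1_in' by (intro inv_into_f_eq) (auto simp: bij_betw_def p'_def)

lemma inv_p'_other:
  assumes "b \<in> A'" "b \<noteq> p a1"
  shows "inv_into A' p' b = inv_into A p b"
proof (rule inv_into_f_eq)
  have "inv_into A p b \<noteq> inv_into A p a1" "inv_into A p b \<noteq> a1"
    using assms a1_in p_inv unfolding A'_def by (metis DiffE insertI1)+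
  then show "inv_into A p b \<in> A'" "p' (inv_into A p b) = b"
    using assms inv_in p_inv unfolding A'_def p'_def by auto
qed (use bij_p' in \<open>simp add: bij_betw_def\<close>)

lemma fin': "finite A'" and nonneg': "\<forall>a\<in>A'. 0 \<le> len a"
  using fin nonneg unfolding A'_def by auto

lemma sum_less_remove_a1: "a1 < x \<Longrightarrow> sum f {i\<in>A. i < x} = f a1 + sum f {i\<in>A'. i < x}"
  using sum_less_split_Min[OF fin nonempty] unfolding a1_def A'_def by blast

lemma sum_len_p'_eq: "sum (len \<circ> p') {i\<in>A'. i < x} = sum (len \<circ> p) {i\<in>A'. i < x}"
  using p_inv[OF a1_in] eq_len by (intro sum.cong) (auto simp: p'_def)

lemma subint_A': "a \<in> A' \<Longrightarrow> subint A' len l' a = subint A len l a"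
  using sum_less_remove_a1[of a len] a1_less unfolding subint_def l'_def A'_def by auto

lemma iet_right_A': "iet_right A' len l' = iet_right A len l"
  using sum.remove[OF fin a1_in, of len] unfolding iet_right_def l'_def A'_def by simp

lemma subint_a1: "subint A len l a1 = {l..<l'}"
  unfolding subint_def less_a1_empty l'_def by simp

lemma tau_A'_other:
  assumes a: "a \<in> A'" "a \<noteq> p a1"
  shows "tau A' len p' a = tau A len p a"
proof -
  have aA: "a \<in> A"
    using a unfolding A'_def by simp
  have "a1 < inv_into A p a"
    using a aA inv_in p_inv by (metis a1_less)
  then show ?thesis
    using a aA sum_less_remove_a1[of "inv_into A p a" "len \<circ> p"] sum_less_remove_a1[of a len] a1_less[of a]
    unfolding tau_reindex[OF bij aA] tau_reindex[OF bij_p' a(1)] inv_p'_other[OF a] sum_len_p'_eq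
    by (simp add: eq_len A'_def)
qed

lemma tau_A'_p_a1: "tau A' len p' (p a1) = tau A len p (p a1) + tau A len p a1"
proof -
  have "a1 < inv_into A p a1" "a1 < p a1"
    using a1_less inv_a1_in' p_a1_in' unfolding A'_def by auto
  then show ?thesis
    using sum_less_remove_a1[of "inv_into A p a1" "len \<circ> p"] sum_less_remove_a1[of "p a1" len]
    unfolding tau_reindex[OF bij a1_in] tau_reindex[OF bij_p' p_a1_in'] tau_reindex[OF bij p_a1_in]
      inv_p'_p_a1 inv_p[OF a1_in] sum_len_p'_eq less_a1_empty
    by (simp add: eq_len)
qed

lemma iet_subint_into_I':
  assumes "a \<in> A" "a \<noteq> p a1" "y \<in> subint A len l a"
  shows "T y \<in> I'"
proof -
  have "a1 < inv_into A p a"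
    using assms(1,2) inv_in p_inv by (metis a1_less)
  then have "(len \<circ> p) a1 \<le> sum (len \<circ> p) {i\<in>A. i < inv_into A p a}"
    using fin a1_in nonneg bij_betw_apply[OF bij] by (intro member_le_sum) auto
  then show ?thesis
    using iet_image_subint[OF data assms(1,3)] eq_len unfolding l'_def iet_right_def by auto
qed

lemma iet_other_letter:
  assumes "b \<in> A'" "b \<noteq> p a1" "y \<in> subint A len l b"
  shows "T y = S y" and "T y \<in> I'"
proof -
  have "b \<in> A"
    using assms(1) unfolding A'_def by simp
  then show "T y = S y"
    using assms tau_A'_other subint_A'
    by (simp add: iet_eq_on_subint[OF fin nonneg] iet_eq_on_subint[OF fin' nonneg'])
  show "T y \<in> I'"
    using iet_subint_into_I' \<open>b \<in> A\<close> assms by blast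
qed

lemma iet_p_a1:
  assumes "y \<in> subint A len l (p a1)"
  shows "T y \<in> subint A len l a1" and "T (T y) = S y" and "S y \<in> I'"
proof -
  show Ty: "T y \<in> subint A len l a1"
    using iet_image_subint(1)[OF data p_a1_in assms] eq_len
    unfolding subint_a1 inv_p[OF a1_in] less_a1_empty l'_def by simp
  have "S y = y + tau A' len p' (p a1)"
    using assms subint_A'[OF p_a1_in'] iet_eq_on_subint[OF fin' nonneg' p_a1_in'] by simp
  then show "T (T y) = S y"
    using Ty assms iet_eq_on_subint[OF fin nonneg] a1_in p_a1_in tau_A'_p_a1 by simp
  then show "S y \<in> I'"
    using iet_subint_into_I'[OF a1_in neq Ty] by simp
qed

lemma orbit_segment:
  assumes "y \<in> I'" and c: "c = letter_of A' len l' y"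
  shows "S y \<in> I'"
    and "(T ^^ length (phi c)) y = S y"
    and "i < length (phi c) \<Longrightarrow> letter_of A len l ((T ^^ i) y) = phi c ! i"
    and "0 < i \<Longrightarrow> i < length (phi c) \<Longrightarrow> (T ^^ i) y \<notin> I'"
proof -
  obtain b where b: "b \<in> A'" "y \<in> subint A' len l' b"
    using ex_subint[OF fin' nonneg', of l' y] assms(1) iet_right_A' by auto
  then have "c = b"
    using c letter_of_eq[OF fin' nonneg'] by simp
  have y: "y \<in> subint A len l b" "letter_of A len l y = b"
    using b subint_A' letter_of_eq[OF fin nonneg] unfolding A'_def by auto
  have "S y \<in> I' \<and> (T ^^ length (phi c)) y = S y
    \<and> (\<forall>i < length (phi c). letter_of A len l ((T ^^ i) y) = phi c ! i)
    \<and> (\<forall>i. 0 < i \<and> i < length (phi c) \<longrightarrow> (T ^^ i) y \<notin> I')"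
  proof (cases "b = p a1")
    case True
    have "phi c = [p a1, a1]"
      using True \<open>c = b\<close> by (simp add: phi_def)
    moreover have "T y \<in> {l..<l'}" "letter_of A len l (T y) = a1" "T (T y) = S y" "S y \<in> I'"
      using iet_p_a1 y(1) letter_of_eq[OF fin nonneg a1_in] subint_a1 True by auto
    ultimately show ?thesis
      using y True by (auto simp: numeral_2_eq_2 less_Suc_eq)
  next
    case False
    then show ?thesis
      using iet_other_letter b(1) y \<open>c = b\<close> by (auto simp: phi_def)
  qed
  then show "S y \<in> I'" "(T ^^ length (phi c)) y = S y"
    "i < length (phi c) \<Longrightarrow> letter_of A len l ((T ^^ i) y) = phi c ! i"
    "0 < i \<Longrightarrow> i < length (phi c) \<Longrightarrow> (T ^^ i) y \<notin> I'"
    by blast+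
qed

lemma induced_map_eq:
  assumes "y \<in> I'"
  shows "(\<exists>n>0. (T ^^ n) y \<in> I') \<and> induced_map T I' y = S y"
proof -
  let ?n = "length (phi (letter_of A' len l' y))"
  have "0 < ?n"
    by (simp add: phi_def)
  moreover have "(T ^^ ?n) y = S y" "S y \<in> I'"
    using orbit_segment assms by simp_all
  ultimately show ?thesis
    using induced_map_eqI[of ?n T y I'] orbit_segment(4)[OF assms refl] by auto
qed

lemma traj_eq:
  assumes "x \<in> I'"
  shows "traj A len p l x = morph_inf phi (traj A' len p' l' x)"
  unfolding traj_eq_letter_of_orbit
  by (rule orbit_coding_morph_inf[where J = I']) (use orbit_segment assms in \<open>auto simp: phi_def\<close>)

end

theorem proposition4p4:
  fixes A :: "'a::linorder set" and len :: "'a \<Rightarrow> real" and p :: "'a \<Rightarrow> 'a" and l :: real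
  assumes data: "iet_data A len p"
    and a1_def: "a1 = Min A"
    and eq_len: "len a1 = len (p a1)"
    and neq: "a1 \<noteq> p a1"
    and A'_def: "A' = A - {a1}"
    and l'_def: "l' = l + len a1"
    and p'_def: "p' = (\<lambda>a. if a = inv_into A p a1 then p a1 else p a)"
    and phi_def: "phi = (\<lambda>c. if c = p a1 then [p a1, a1] else [c])"
  shows "iet_data A' len p'
     \<and> iet_right A' len l' = iet_right A len l
     \<and> (\<forall>a\<in>A'. subint A' len l' a = subint A len l a)
     \<and> (\<forall>x\<in>{l'..<iet_right A len l}.
          (\<exists>n>0. (iet A len p l ^^ n) x \<in> {l'..<iet_right A len l})
        \<and> induced_map (iet A len p l) {l'..<iet_right A len l} x = iet A' len p' l' x)
     \<and> (\<forall>x\<in>{l'..<iet_right A len l}.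
          traj A len p l x = morph_inf phi (traj A' len p' l' x))"
proof -
  interpret first_letter_induction A len p l a1 A' l' p' phi
    using assms by unfold_locales
  show ?thesis
    using data' iet_right_A' subint_A' induced_map_eq traj_eq by blast
qed

end
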